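(* For any tensor $\mathcal{A}\in\mathbb{R}^{N_1\times N_2\times N_3}$ with $\mathcal{A}\neq\mathbf{0}$, $\xi(\mathcal{A})\,\mu(\mathcal{A})\ge 1$.
   Context: For $\mathcal{A}\in\mathbb{R}^{N_1\times N_2\times N_3}$ write $A^{(k)}=\mathcal{A}(:,:,k)$ for its frontal slices. $\mathrm{bcirc}(\mathcal{A})\in\mathbb{R}^{N_1N_3\times N_2N_3}$ is the block circulant matrix whose $(i,j)$ block is $A^{(((i-j)\bmod N_3)+1)}$; $\mathrm{unfold}$ stacks the frontal slices vertically, $\mathrm{fold}$ is its inverse, and the t-product is $\mathcal{A}*\mathcal{B}=\mathrm{fold}(\mathrm{bcirc}(\mathcal{A})\,\mathrm{unfold}(\mathcal{B}))$. The transpose $\mathcal{A}^\top$ transposes each frontal slice and reverses the order of slices $2,\dots,N_3$. The identity tensor has first frontal slice the identity and other slices zero; f-diagonal means every frontal slice is diagonal. Every $\mathcal{A}$ of tubal rank $R$ has a skinny t-SVD $\mathcal{A}=\mathcal{U}*\mathcal{S}*\mathcal{V}^\top$ with $\mathcal{U}\in\mathbb{R}^{N_1\times R\times N_3}$, $\mathcal{V}\in\mathbb{R}^{N_2\times R\times N_3}$, $\mathcal{U}^\top*\mathcal{U}=\mathcal{V}^\top*\mathcal{V}=\mathcal{I}$, $\mathcal{S}$ f-diagonal. Tensor spectral norm $\|\mathcal{A}\|=\|\mathrm{bcirc}(\mathcal{A})\|$; $\|\mathcal{A}\|_\infty$ is the maximum absolute entry. $T(\mathcal{A})=\{\mathcal{U}*\mathcal{Y}^\top+\mathcal{W}*\mathcal{V}^\top:\mathcal{Y}\in\mathbb{R}^{N_2\times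 R\times N_3},\mathcal{W}\in\mathbb{R}^{N_1\times R\times N_3}\}$; $\Omega(\mathcal{A})=\{\mathcal{N}:\mathrm{support}(\mathcal{N})\subseteq\mathrm{support}(\mathcal{A})\}$. $\xi(\mathcal{A})=\max_{\mathcal{N}\in T(\mathcal{A}),\|\mathcal{N}\|\le1}\|\mathcal{N}\|_\infty$, $\mu(\mathcal{A})=\max_{\mathcal{N}\in\Omega(\mathcal{A}),\|\mathcal{N}\|_\infty\le1}\|\mathcal{N}\|$. *)

theory Defs
  imports Complex_Main
begin

text \<open>Third-order real tensors of size N1 x N2 x N3 are functions nat => nat => nat => real
  (0-based indices) that vanish outside the index box. Matrices are nat => nat => real.\<close>

type_synonym tensor = "nat \<Rightarrow> nat \<Rightarrow> nat \<Rightarrow> real"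
type_synonym rmat = "nat \<Rightarrow> nat \<Rightarrow> real"

definition is_tensor :: "nat \<Rightarrow> nat \<Rightarrow> nat \<Rightarrow> tensor \<Rightarrow> bool" where
  "is_tensor N1 N2 N3 A \<longleftrightarrow> (\<forall>i j k. \<not> (i < N1 \<and> j < N2 \<and> k < N3) \<longrightarrow> A i j k = 0)"

definition tzero :: tensor where
  "tzero = (\<lambda>i j k. 0)"

definition tadd :: "tensor \<Rightarrow> tensor \<Rightarrow> tensor" where
  "tadd A B = (\<lambda>i j k. A i j k + B i j k)"

text \<open>Block circulant matrix: block (a,b) (0-based) is the frontal slice ((a - b) mod N3).\<close>
definition bcirc :: "nat \<Rightarrow> nat \<Rightarrow> nat \<Rightarrow> tensor \<Rightarrow> rmat" where
  "bcirc N1 N2 N3 A = (\<lambda>p q. if p < N1 * N3 \<and> q < N2 * N3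
      then A (p mod N1) (q mod N2) ((p div N1 + N3 - q div N2) mod N3) else 0)"

definition tunfold :: "nat \<Rightarrow> nat \<Rightarrow> nat \<Rightarrow> tensor \<Rightarrow> rmat" where
  "tunfold N1 N2 N3 B = (\<lambda>p j. if p < N1 * N3 \<and> j < N2 then B (p mod N1) j (p div N1) else 0)"

definition tfold :: "nat \<Rightarrow> nat \<Rightarrow> nat \<Rightarrow> rmat \<Rightarrow> tensor" where
  "tfold N1 N2 N3 M = (\<lambda>i j k. if i < N1 \<and> j < N2 \<and> k < N3 then M (k * N1 + i) j else 0)"

definition matmul :: "nat \<Rightarrow> rmat \<Rightarrow> rmat \<Rightarrow> rmat" where
  "matmul n M X = (\<lambda>p j. \<Sum>q<n. M p q * X q j)"

text \<open>t-product of A (N1 x N2 x N3) and B (N2 x N4 x N3).\<close>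
definition tprod :: "nat \<Rightarrow> nat \<Rightarrow> nat \<Rightarrow> nat \<Rightarrow> tensor \<Rightarrow> tensor \<Rightarrow> tensor" where
  "tprod N1 N2 N4 N3 A B = tfold N1 N4 N3 (matmul (N2 * N3) (bcirc N1 N2 N3 A) (tunfold N2 N4 N3 B))"

text \<open>Transpose of A (N1 x N2 x N3): transpose each slice, reverse slices 2..N3.\<close>
definition ttrans :: "nat \<Rightarrow> nat \<Rightarrow> nat \<Rightarrow> tensor \<Rightarrow> tensor" where
  "ttrans N1 N2 N3 A = (\<lambda>i j k. if i < N2 \<and> j < N1 \<and> k < N3 then A j i ((N3 - k) mod N3) else 0)"

definition tident :: "nat \<Rightarrow> nat \<Rightarrow> tensor" where
  "tident n N3 = (\<lambda>i j k. if i < n \<and> j = i \<and> k = 0 \<and> 0 < N3 then 1 else 0)"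

definition fdiag :: "tensor \<Rightarrow> bool" where
  "fdiag S \<longleftrightarrow> (\<forall>i j k. i \<noteq> j \<longrightarrow> S i j k = 0)"

definition opnorm :: "nat \<Rightarrow> nat \<Rightarrow> rmat \<Rightarrow> real" where
  "opnorm m n M = Sup {sqrt (\<Sum>p<m. (\<Sum>q<n. M p q * x q)\<^sup>2) | x. (\<Sum>q<n. (x q)\<^sup>2) \<le> 1}"

definition tnorm :: "nat \<Rightarrow> nat \<Rightarrow> nat \<Rightarrow> tensor \<Rightarrow> real" where
  "tnorm N1 N2 N3 A = opnorm (N1 * N3) (N2 * N3) (bcirc N1 N2 N3 A)"

definition inf_norm :: "nat \<Rightarrow> nat \<Rightarrow> nat \<Rightarrow> tensor \<Rightarrow> real" where
  "inf_norm N1 N2 N3 A = Max (insert 0 {\<bar>A i j k\<bar> | i j k. i < N1 \<and> j < N2 \<and> k < N3})"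

definition dft_slice :: "nat \<Rightarrow> tensor \<Rightarrow> nat \<Rightarrow> nat \<Rightarrow> nat \<Rightarrow> complex" where
  "dft_slice N3 A k = (\<lambda>i j. \<Sum>m<N3. complex_of_real (A i j m) * cis (- 2 * pi * real k * real m / real N3))"

definition cmat_rank :: "nat \<Rightarrow> nat \<Rightarrow> (nat \<Rightarrow> nat \<Rightarrow> complex) \<Rightarrow> nat" where
  "cmat_rank m n M = Max {card C | C. C \<subseteq> {..<n} \<and>
      (\<forall>c. (\<forall>i<m. (\<Sum>j\<in>C. c j * M i j) = 0) \<longrightarrow> (\<forall>j\<in>C. c j = 0))}"

definition tubal_rank :: "nat \<Rightarrow> nat \<Rightarrow> nat \<Rightarrow> tensor \<Rightarrow> nat" where
  "tubal_rank N1 N2 N3 A = Max (insert 0 ((\<lambda>k. cmat_rank N1 N2 (dft_slice N3 A k)) ` {..<N3}))"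

definition skinny_tsvd :: "nat \<Rightarrow> nat \<Rightarrow> nat \<Rightarrow> nat \<Rightarrow> tensor \<Rightarrow> tensor \<Rightarrow> tensor \<Rightarrow> tensor \<Rightarrow> bool" where
  "skinny_tsvd N1 N2 N3 R A U S V \<longleftrightarrow>
     is_tensor N1 R N3 U \<and> is_tensor R R N3 S \<and> is_tensor N2 R N3 V \<and>
     tprod R N1 R N3 (ttrans N1 R N3 U) U = tident R N3 \<and>
     tprod R N2 R N3 (ttrans N2 R N3 V) V = tident R N3 \<and>
     fdiag S \<and>
     A = tprod N1 R N2 N3 (tprod N1 R R N3 U S) (ttrans N2 R N3 V)"

definition tangent_space :: "nat \<Rightarrow> nat \<Rightarrow> nat \<Rightarrow> nat \<Rightarrow> tensor \<Rightarrow> tensor \<Rightarrow> tensor set" where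
  "tangent_space N1 N2 N3 R U V = {tadd (tprod N1 R N2 N3 U (ttrans N2 R N3 Y)) (tprod N1 R N2 N3 W (ttrans N2 R N3 V))
      | Y W. is_tensor N2 R N3 Y \<and> is_tensor N1 R N3 W}"

definition tsupport :: "tensor \<Rightarrow> (nat \<times> nat \<times> nat) set" where
  "tsupport A = {(i, j, k). A i j k \<noteq> 0}"

definition support_space :: "nat \<Rightarrow> nat \<Rightarrow> nat \<Rightarrow> tensor \<Rightarrow> tensor set" where
  "support_space N1 N2 N3 A = {N. is_tensor N1 N2 N3 N \<and> tsupport N \<subseteq> tsupport A}"

definition xi :: "nat \<Rightarrow> nat \<Rightarrow> nat \<Rightarrow> nat \<Rightarrow> tensor \<Rightarrow> tensor \<Rightarrow> real" where
  "xi N1 N2 N3 R U V = Sup {inf_norm N1 N2 N3 N | N. N \<in> tangent_space N1 N2 N3 R U V \<and> tnorm N1 N2 N3 N \<le> 1}"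

definition mu :: "nat \<Rightarrow> nat \<Rightarrow> nat \<Rightarrow> tensor \<Rightarrow> real" where
  "mu N1 N2 N3 A = Sup {tnorm N1 N2 N3 N | N. N \<in> support_space N1 N2 N3 A \<and> inf_norm N1 N2 N3 N \<le> 1}"

end

theory Submission
  imports Defs
begin

text \<open>Since \<open>A = (U * S) * V\<^sup>T\<close>, A lies in its own tangent space, and it trivially lies in its
  support space. Normalising A by its spectral norm thus gives an element of the tangent space of
  spectral norm 1 whose largest entry is \<open>\<parallel>A\<parallel>\<^sub>\<infinity> / \<parallel>A\<parallel>\<close>; normalising A by its largest entry
  gives an element of the support space with entries bounded by 1 whose spectral norm is
  \<open>\<parallel>A\<parallel> / \<parallel>A\<parallel>\<^sub>\<infinity>\<close>. Hence \<open>\<xi>(A) \<ge> \<parallel>A\<parallel>\<^sub>\<infinity> / \<parallel>A\<parallel>\<close> and \<open>\<mu>(A) \<ge> \<parallel>A\<parallel> / \<parallel>A\<parallel>\<^sub>\<infinity>\<close>.\<close>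

definition tscale :: "real \<Rightarrow> tensor \<Rightarrow> tensor" where
  "tscale c A = (\<lambda>i j k. c * A i j k)"

lemma abs_sum_le_sum_abs_of_unit:
  fixes x :: "nat \<Rightarrow> real"
  assumes "(\<Sum>q<n. (x q)\<^sup>2) \<le> 1"
  shows "\<bar>\<Sum>q<n. M q * x q\<bar> \<le> (\<Sum>q<n. \<bar>M q\<bar>)"
proof -
  have "\<bar>x q\<bar> \<le> 1" if "q < n" for q
  proof -
    have "(x q)\<^sup>2 \<le> (\<Sum>q<n. (x q)\<^sup>2)"
      by (rule member_le_sum) (use that in auto)
    then have "(x q)\<^sup>2 \<le> 1" using assms by linarith
    then show ?thesis by (simp add: abs_square_le_1)
  qed
  then have "(\<Sum>q<n. \<bar>M q * x q\<bar>) \<le> (\<Sum>q<n. \<bar>M q\<bar>)"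
    by (intro sum_mono) (auto simp: abs_mult intro: mult_left_le)
  then show ?thesis using sum_abs[of "\<lambda>q. M q * x q" "{..<n}"] by linarith
qed

lemma opnorm_upper:
  assumes "(\<Sum>q<n. (x q)\<^sup>2) \<le> 1"
  shows "sqrt (\<Sum>p<m. (\<Sum>q<n. M p q * x q)\<^sup>2) \<le> opnorm m n M"
proof -
  have "sqrt (\<Sum>p<m. (\<Sum>q<n. M p q * y q)\<^sup>2) \<le> sqrt (\<Sum>p<m. (\<Sum>q<n. \<bar>M p q\<bar>)\<^sup>2)"
    if "(\<Sum>q<n. (y q)\<^sup>2) \<le> 1" for y
    using abs_sum_le_sum_abs_of_unit[OF that]
    by (intro real_sqrt_le_mono sum_mono) (metis abs_ge_zero power2_abs power_mono)
  then have "bdd_above {sqrt (\<Sum>p<m. (\<Sum>q<n. M p q * y q)\<^sup>2) | y. (\<Sum>q<n. (y q)\<^sup>2) \<le> 1}"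
    by (intro bdd_aboveI) blast
  then show ?thesis
    unfolding opnorm_def by (rule cSup_upper[rotated]) (use assms in blast)
qed

lemma opnorm_least:
  assumes "\<And>x. (\<Sum>q<n. (x q)\<^sup>2) \<le> 1 \<Longrightarrow> sqrt (\<Sum>p<m. (\<Sum>q<n. M p q * x q)\<^sup>2) \<le> B"
  shows "opnorm m n M \<le> B"
proof -
  have "sqrt (\<Sum>p<m. (\<Sum>q<n. M p q * (\<lambda>_. 0) q)\<^sup>2) \<in>
      {sqrt (\<Sum>p<m. (\<Sum>q<n. M p q * x q)\<^sup>2) | x. (\<Sum>q<n. (x q)\<^sup>2) \<le> 1}"
    by (intro CollectI exI[of _ "\<lambda>_. 0"]) simp
  then show ?thesis
    unfolding opnorm_def using assms by (intro cSup_least) blast+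
qed

lemma opnorm_nonneg: "0 \<le> opnorm m n M"
  using opnorm_upper[where x="\<lambda>_. 0"] by simp

lemma abs_le_opnorm:
  assumes "p < m" "q < n"
  shows "\<bar>M p q\<bar> \<le> opnorm m n M"
proof -
  define e where "e = (\<lambda>r. if r = q then 1 else (0::real))"
  have "(e r)\<^sup>2 = e r" for r by (simp add: e_def)
  then have unit: "(\<Sum>r<n. (e r)\<^sup>2) = 1"
    using assms(2) by (simp add: e_def)
  have column: "(\<Sum>r<n. M p' r * e r) = M p' q" for p'
    using assms(2) by (simp add: e_def if_distrib cong: if_cong)
  have "\<bar>M p q\<bar> = sqrt ((M p q)\<^sup>2)" by simp
  also have "\<dots> \<le> sqrt (\<Sum>p'<m. (M p' q)\<^sup>2)"
    by (intro real_sqrt_le_mono member_le_sum) (use assms in auto)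
  also have "\<dots> \<le> opnorm m n M"
    using opnorm_upper[where x=e and m=m and n=n and M=M] unit by (simp add: column)
  finally show ?thesis .
qed

lemma opnorm_scale_le:
  assumes "0 \<le> c"
  shows "opnorm m n (\<lambda>p q. c * M p q) \<le> c * opnorm m n M"
proof (rule opnorm_least)
  fix x :: "nat \<Rightarrow> real" assume x: "(\<Sum>q<n. (x q)\<^sup>2) \<le> 1"
  have "sqrt (\<Sum>p<m. (\<Sum>q<n. c * M p q * x q)\<^sup>2) = c * sqrt (\<Sum>p<m. (\<Sum>q<n. M p q * x q)\<^sup>2)"
    using assms
    by (simp add: sum_distrib_left[symmetric] mult.assoc power_mult_distrib real_sqrt_mult)
  also have "\<dots> \<le> c * opnorm m n M"
    by (intro mult_left_mono opnorm_upper x assms)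
  finally show "sqrt (\<Sum>p<m. (\<Sum>q<n. c * M p q * x q)\<^sup>2) \<le> c * opnorm m n M" .
qed

lemma opnorm_scale:
  assumes "0 \<le> c"
  shows "opnorm m n (\<lambda>p q. c * M p q) = c * opnorm m n M"
proof (cases "c = 0")
  case True
  then show ?thesis
    using opnorm_scale_le[of 0 m n M] opnorm_nonneg[of m n] by (simp add: order_antisym)
next
  case False
  then have "opnorm m n M \<le> (1 / c) * opnorm m n (\<lambda>p q. c * M p q)"
    using opnorm_scale_le[of "1 / c" m n "\<lambda>p q. c * M p q"] assms by simp
  then show ?thesis
    using opnorm_scale_le[OF assms, of m n M] assms False by (simp add: field_simps)
qed

lemma opnorm_le_entry_bound:
  assumes "0 \<le> B" "\<And>p q. p < m \<Longrightarrow> q < n \<Longrightarrow> \<bar>M p q\<bar> \<le> B"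
  shows "opnorm m n M \<le> sqrt (real m) * (real n * B)"
proof (rule opnorm_least)
  fix x :: "nat \<Rightarrow> real" assume x: "(\<Sum>q<n. (x q)\<^sup>2) \<le> 1"
  have "(\<Sum>q<n. M p q * x q)\<^sup>2 \<le> (real n * B)\<^sup>2" if "p < m" for p
  proof -
    have "(\<Sum>q<n. \<bar>M p q\<bar>) \<le> (\<Sum>q<n. B)"
      using that by (intro sum_mono) (simp add: assms(2))
    then have "\<bar>\<Sum>q<n. M p q * x q\<bar> \<le> real n * B"
      using abs_sum_le_sum_abs_of_unit[OF x, of "M p"] by simp
    from power_mono[OF this abs_ge_zero, of 2] show ?thesis by simp
  qed
  then have "(\<Sum>p<m. (\<Sum>q<n. M p q * x q)\<^sup>2) \<le> real m * (real n * B)\<^sup>2"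
    using sum_mono[of "{..<m}" "\<lambda>p. (\<Sum>q<n. M p q * x q)\<^sup>2" "\<lambda>_. (real n * B)\<^sup>2"] by simp
  then show "sqrt (\<Sum>p<m. (\<Sum>q<n. M p q * x q)\<^sup>2) \<le> sqrt (real m) * (real n * B)"
    using assms(1) real_sqrt_le_mono by (fastforce simp: real_sqrt_mult)
qed

lemma finite_inf_norm_set:
  fixes A :: tensor and N1 N2 N3 :: nat
  shows "finite (insert 0 {\<bar>A i j k\<bar> | i j k. i < N1 \<and> j < N2 \<and> k < N3})"
proof -
  have "{\<bar>A i j k\<bar> | i j k. i < N1 \<and> j < N2 \<and> k < N3}
      = (\<lambda>(i, j, k). \<bar>A i j k\<bar>) ` ({..<N1} \<times> {..<N2} \<times> {..<N3})"
    by (auto simp: image_iff; blast)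
  then show ?thesis
    unfolding finite_insert by (simp only:) (intro finite_imageI finite_cartesian_product; simp)
qed

lemma abs_le_inf_norm: "i < N1 \<Longrightarrow> j < N2 \<Longrightarrow> k < N3 \<Longrightarrow> \<bar>A i j k\<bar> \<le> inf_norm N1 N2 N3 A"
  unfolding inf_norm_def by (rule Max_ge[OF finite_inf_norm_set]) blast

lemma inf_norm_nonneg: "0 \<le> inf_norm N1 N2 N3 A"
  unfolding inf_norm_def by (rule Max_ge[OF finite_inf_norm_set]) blast

lemma inf_norm_le:
  assumes "0 \<le> B" "\<And>i j k. i < N1 \<Longrightarrow> j < N2 \<Longrightarrow> k < N3 \<Longrightarrow> \<bar>A i j k\<bar> \<le> B"
  shows "inf_norm N1 N2 N3 A \<le> B"
  unfolding inf_norm_def using assms by (subst Max_le_iff[OF finite_inf_norm_set]) auto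

lemma inf_norm_tscale:
  assumes "0 \<le> c"
  shows "inf_norm N1 N2 N3 (tscale c A) = c * inf_norm N1 N2 N3 A"
proof -
  have "mono ((*) c)" using assms by (simp add: mono_def mult_left_mono)
  moreover have "insert 0 {\<bar>tscale c A i j k\<bar> | i j k. i < N1 \<and> j < N2 \<and> k < N3}
      = (*) c ` insert 0 {\<bar>A i j k\<bar> | i j k. i < N1 \<and> j < N2 \<and> k < N3}"
    using assms by (auto simp: tscale_def abs_mult)
  ultimately show ?thesis
    unfolding inf_norm_def by (simp add: mono_Max_commute[OF _ finite_inf_norm_set])
qed

lemma bcirc_tscale: "bcirc N1 N2 N3 (tscale c A) = (\<lambda>p q. c * bcirc N1 N2 N3 A p q)"
  unfolding bcirc_def tscale_def by (simp add: fun_eq_iff)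

lemma tnorm_tscale: "0 \<le> c \<Longrightarrow> tnorm N1 N2 N3 (tscale c A) = c * tnorm N1 N2 N3 A"
  unfolding tnorm_def bcirc_tscale by (rule opnorm_scale)

lemma abs_le_tnorm:
  assumes "i < N1" "j < N2" "k < N3"
  shows "\<bar>A i j k\<bar> \<le> tnorm N1 N2 N3 A"
proof -
  have row: "k * N1 + i < N1 * N3"
  proof -
    have "k * N1 + i < (k + 1) * N1" using assms(1) by simp
    also have "\<dots> \<le> N3 * N1" using assms(3) by (intro mult_right_mono) auto
    finally show ?thesis by (simp add: mult.commute)
  qed
  have column: "j < N2 * N3" using assms(2,3) by (simp add: less_le_trans)
  have "bcirc N1 N2 N3 A (k * N1 + i) j = A i j k"
    unfolding bcirc_def using row column assms by simp
  then show ?thesis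
    unfolding tnorm_def using abs_le_opnorm[OF row column, of "bcirc N1 N2 N3 A"] by simp
qed

lemma inf_norm_le_tnorm: "inf_norm N1 N2 N3 A \<le> tnorm N1 N2 N3 A"
  by (intro inf_norm_le abs_le_tnorm) (simp_all add: tnorm_def opnorm_nonneg)

lemma abs_bcirc_le_inf_norm: "\<bar>bcirc N1 N2 N3 A p q\<bar> \<le> inf_norm N1 N2 N3 A"
proof (cases "p < N1 * N3 \<and> q < N2 * N3")
  case True
  then have "0 < N1" "0 < N2" "0 < N3" by (auto intro: gr0I)
  then have "\<bar>A (p mod N1) (q mod N2) ((p div N1 + N3 - q div N2) mod N3)\<bar> \<le> inf_norm N1 N2 N3 A"
    by (intro abs_le_inf_norm) simp_all
  then show ?thesis using True by (simp add: bcirc_def)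
next
  case False
  then have "bcirc N1 N2 N3 A p q = 0" unfolding bcirc_def by auto
  then show ?thesis by (simp add: inf_norm_nonneg)
qed

lemma tnorm_le_inf_norm:
  "tnorm N1 N2 N3 A \<le> sqrt (real (N1 * N3)) * (real (N2 * N3) * inf_norm N1 N2 N3 A)"
  unfolding tnorm_def by (intro opnorm_le_entry_bound inf_norm_nonneg abs_bcirc_le_inf_norm)

lemma is_tensor_tprod: "is_tensor N1 N4 N3 (tprod N1 N2 N4 N3 A B)"
  unfolding is_tensor_def tprod_def tfold_def by simp

lemma is_tensor_tscale: "is_tensor N1 N2 N3 A \<Longrightarrow> is_tensor N1 N2 N3 (tscale c A)"
  unfolding is_tensor_def tscale_def by simp

lemma tprod_tscale_left: "tprod N1 N2 N4 N3 (tscale c A) B = tscale c (tprod N1 N2 N4 N3 A B)"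
  unfolding tprod_def bcirc_tscale unfolding tfold_def matmul_def tscale_def
  by (auto simp: sum_distrib_left mult.assoc intro!: ext)

lemma tprod_ttrans_tzero: "tprod N1 N2 N4 N3 A (ttrans N4 N2 N3 tzero) = tzero"
  unfolding tprod_def ttrans_def tzero_def tunfold_def tfold_def matmul_def by (auto intro!: ext)

lemma tscale_mem_tangent_space:
  assumes "skinny_tsvd N1 N2 N3 R A U S V"
  shows "tscale c A \<in> tangent_space N1 N2 N3 R U V"
proof -
  define W where "W = tscale c (tprod N1 R R N3 U S)"
  have "A = tprod N1 R N2 N3 (tprod N1 R R N3 U S) (ttrans N2 R N3 V)"
    using assms unfolding skinny_tsvd_def by blast
  then have "tscale c A = tadd (tprod N1 R N2 N3 U (ttrans N2 R N3 tzero)) (tprod N1 R N2 N3 W (ttrans N2 R N3 V))"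
    by (simp add: W_def tprod_ttrans_tzero tprod_tscale_left) (simp add: tadd_def tzero_def)
  moreover have "is_tensor N2 R N3 tzero" by (simp add: is_tensor_def tzero_def)
  moreover have "is_tensor N1 R N3 W" unfolding W_def by (intro is_tensor_tscale is_tensor_tprod)
  ultimately show ?thesis unfolding tangent_space_def by blast
qed

lemma tscale_mem_support_space:
  "is_tensor N1 N2 N3 A \<Longrightarrow> c \<noteq> 0 \<Longrightarrow> tscale c A \<in> support_space N1 N2 N3 A"
  by (simp add: support_space_def tsupport_def is_tensor_tscale) (simp add: tscale_def)

lemma inf_norm_le_xi:
  assumes "N \<in> tangent_space N1 N2 N3 R U V" "tnorm N1 N2 N3 N \<le> 1"
  shows "inf_norm N1 N2 N3 N \<le> xi N1 N2 N3 R U V"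
proof -
  have "bdd_above {inf_norm N1 N2 N3 N | N. N \<in> tangent_space N1 N2 N3 R U V \<and> tnorm N1 N2 N3 N \<le> 1}"
    by (rule bdd_aboveI[where M=1]) (auto intro: order_trans[OF inf_norm_le_tnorm])
  then show ?thesis
    unfolding xi_def by (rule cSup_upper[rotated]) (use assms in blast)
qed

lemma tnorm_le_mu:
  assumes "N \<in> support_space N1 N2 N3 A" "inf_norm N1 N2 N3 N \<le> 1"
  shows "tnorm N1 N2 N3 N \<le> mu N1 N2 N3 A"
proof -
  have "tnorm N1 N2 N3 N' \<le> sqrt (real (N1 * N3)) * (real (N2 * N3) * 1)"
    if "inf_norm N1 N2 N3 N' \<le> 1" for N'
    using tnorm_le_inf_norm[of N1 N2 N3 N'] that
    by (elim order_trans) (intro mult_left_mono; simp)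
  then have "bdd_above {tnorm N1 N2 N3 N | N. N \<in> support_space N1 N2 N3 A \<and> inf_norm N1 N2 N3 N \<le> 1}"
    by (intro bdd_aboveI) blast
  then show ?thesis
    unfolding mu_def by (rule cSup_upper[rotated]) (use assms in blast)
qed

lemma inf_norm_le_xi_mul_tnorm:
  assumes "skinny_tsvd N1 N2 N3 R A U S V"
  shows "inf_norm N1 N2 N3 A \<le> xi N1 N2 N3 R U V * tnorm N1 N2 N3 A"
proof (cases "tnorm N1 N2 N3 A = 0")
  case True
  then show ?thesis using inf_norm_le_tnorm[of N1 N2 N3 A] by simp
next
  case False
  define a where "a = tnorm N1 N2 N3 A"
  have "0 < a" using False opnorm_nonneg unfolding a_def tnorm_def by (simp add: order_le_neq_trans)
  then have "inf_norm N1 N2 N3 (tscale (1 / a) A) \<le> xi N1 N2 N3 R U V"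
    by (intro inf_norm_le_xi tscale_mem_tangent_space[OF assms]) (simp_all add: tnorm_tscale a_def)
  then show ?thesis
    using \<open>0 < a\<close> by (simp add: inf_norm_tscale a_def divide_simps mult.commute)
qed

lemma tnorm_le_mu_mul_inf_norm:
  assumes "is_tensor N1 N2 N3 A"
  shows "tnorm N1 N2 N3 A \<le> mu N1 N2 N3 A * inf_norm N1 N2 N3 A"
proof (cases "inf_norm N1 N2 N3 A = 0")
  case True
  then show ?thesis using tnorm_le_inf_norm[of N1 N2 N3 A] by simp
next
  case False
  define m where "m = inf_norm N1 N2 N3 A"
  have "0 < m" using False inf_norm_nonneg unfolding m_def by (simp add: order_le_neq_trans)
  then have "tnorm N1 N2 N3 (tscale (1 / m) A) \<le> mu N1 N2 N3 A"
    by (intro tnorm_le_mu tscale_mem_support_space[OF assms]) (simp_all add: inf_norm_tscale m_def)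
  then show ?thesis
    using \<open>0 < m\<close> by (simp add: tnorm_tscale m_def divide_simps mult.commute)
qed

theorem corollary1:
  fixes N1 N2 N3 R :: nat and A U S V :: tensor
  assumes "is_tensor N1 N2 N3 A"
    and "A \<noteq> tzero"
    and "R = tubal_rank N1 N2 N3 A"
    and "skinny_tsvd N1 N2 N3 R A U S V"
  shows "xi N1 N2 N3 R U V * mu N1 N2 N3 A \<ge> 1"
proof -
  obtain i j k where ijk: "i < N1" "j < N2" "k < N3" "A i j k \<noteq> 0"
    using assms(1,2) unfolding is_tensor_def tzero_def by (meson ext)
  define m where "m = inf_norm N1 N2 N3 A"
  define a where "a = tnorm N1 N2 N3 A"
  have "0 < m" using abs_le_inf_norm[OF ijk(1-3), of A] ijk(4) unfolding m_def by linarith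
  moreover have "m \<le> a" unfolding m_def a_def by (rule inf_norm_le_tnorm)
  moreover have "m \<le> xi N1 N2 N3 R U V * a"
    unfolding m_def a_def by (rule inf_norm_le_xi_mul_tnorm[OF assms(4)])
  moreover have "a \<le> mu N1 N2 N3 A * m"
    unfolding m_def a_def by (rule tnorm_le_mu_mul_inf_norm[OF assms(1)])
  ultimately have "m * a \<le> (xi N1 N2 N3 R U V * mu N1 N2 N3 A) * (m * a)"
    using mult_mono[of m "xi N1 N2 N3 R U V * a" a "mu N1 N2 N3 A * m"] by (simp add: ac_simps)
  then show ?thesis using \<open>0 < m\<close> \<open>m \<le> a\<close> by simp
qed

end
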